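(* Let $(k_i)_{i\in\mathbb N}\subset\mathbb N$ satisfy $k_{2i}>1$ for infinitely many $i$ and $k_{2i-1}>1$ for infinitely many $i$. Then $\bigcap_{n\ge1} Q^+B_{k_n}B_{k_{n-1}}\cdots B_{k_1}$ is a single half-line; equivalently, for every nonzero $\vec a\in Q^+$ the limit $(u,v,w)=\lim_{n\to\infty}\frac{\vec aB_{k_n}\cdots B_{k_1}}{\|\vec aB_{k_n}\cdots B_{k_1}\|_1}$ exists and is independent of $\vec a$, i.e. the direction $(u,v,w)$ is uniquely determined by $(k_i)_{i\in\mathbb N}$.
   Context: Vectors are row vectors and matrices act by right multiplication. $Q^+=\{x\in\mathbb R^3:x_i\ge0\}$. For $k\in\mathbb N$, $B_k=\begin{pmatrix}0&1&k-1\\1&0&0\\0&1&k\end{pmatrix}$ (this equals $UA_k^{-1}U^{-1}$ with $A_k=\begin{pmatrix}0&k&k-1\\1&0&0\\0&1&1\end{pmatrix}$ and $U=\begin{pmatrix}0&1&0\\1&0&0\\0&0&-1\end{pmatrix}$); each $B_k$ maps $Q^+$ into itself. *)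

theory Defs
  imports "HOL-Analysis.Analysis"
begin

text \<open>Row vectors in R^3 are elements of real^3; matrices act by right
multiplication, x v* M.  Rows of B_k are (0,1,k-1), (1,0,0), (0,1,k).\<close>

definition Bmat :: "nat \<Rightarrow> real^3^3" where
  "Bmat k = vector [vector [0, 1, real k - 1], vector [1, 0, 0], vector [0, 1, real k]]"

definition Qplus :: "(real^3) set" where
  "Qplus = {x. \<forall>i. 0 \<le> x $ i}"

fun prodB :: "(nat \<Rightarrow> nat) \<Rightarrow> nat \<Rightarrow> real^3^3" where
  "prodB k 0 = mat 1"
| "prodB k (Suc n) = Bmat (k (Suc n)) ** prodB k n"

definition norm1 :: "real^3 \<Rightarrow> real" where
  "norm1 x = (\<Sum>i\<in>UNIV. \<bar>x $ i\<bar>)"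

end

theory Submission
  imports Defs
begin

(* The cones C_n = Q+ B_{k_n} ... B_{k_1} are nested. Measure how far apart the
   l1-normalisations of two vectors are by their largest coordinate difference. A block
   B_{k_{s+2j+2}} B_1^{2j} B_{k_{s+1}} whose outer digits are at least 2 maps Q+ into
   {z. z1 + z2 <= 2 z3}, since B_1^2 is a shear; combining the rows of B_{k_s} ... B_{k_1}, whose
   third row has the largest coordinate sum, with such weights shrinks that distance within the
   cone by the factor 8/9. The parity hypotheses provide infinitely many such blocks, so the
   normalised cones shrink to one direction d. The cones are closed, hence all contain d, and the
   normalised orbit of every nonzero a in Q+ converges to d. *)

definition coord_sum :: "real^'n \<Rightarrow> real" where
  "coord_sum x = (\<Sum>i\<in>UNIV. x $ i)"

definition normalize_sum :: "real^'n \<Rightarrow> real^'n" where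
  "normalize_sum x = (1 / coord_sum x) *\<^sub>R x"

lemma coord_sum_3: "coord_sum (x::real^3) = x$1 + x$2 + x$3"
  by (simp add: coord_sum_def sum_3)

lemma coord_sum_scaleR: "coord_sum (c *\<^sub>R x) = c * coord_sum x"
  by (simp add: coord_sum_def sum_distrib_left)

lemma coord_sum_vector_matrix: "coord_sum (x v* G) = (\<Sum>l\<in>UNIV. x$l * coord_sum (G$l))"
  unfolding coord_sum_def vector_matrix_mult_def
  by (simp add: sum_distrib_left) (rule sum.swap)

lemma coord_sum_zero [simp]: "coord_sum 0 = 0"
  by (simp add: coord_sum_def)

lemma normalize_sum_idem: "coord_sum x = 1 \<Longrightarrow> normalize_sum x = x"
  by (simp add: normalize_sum_def)

lemma coord_sum_normalize_sum: "coord_sum x \<noteq> 0 \<Longrightarrow> coord_sum (normalize_sum x) = 1"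
  by (simp add: normalize_sum_def coord_sum_scaleR)

lemma axis_vector_matrix: "axis l 1 v* (G::real^'n^'m) = G$l"
  by (simp add: vec_eq_iff vector_matrix_mult_def axis_def if_distrib[where f = "\<lambda>c. c * _"] cong: if_cong)

lemma row_matrix_mult: "(A ** B)$i = A$i v* (B::real^'n^'m)"
  by (simp add: matrix_matrix_mult_def vector_matrix_mult_def vec_eq_iff mult.commute)

lemma Qplus_iff: "x \<in> Qplus \<longleftrightarrow> 0 \<le> x$1 \<and> 0 \<le> x$2 \<and> 0 \<le> x$3"
  by (simp add: Qplus_def forall_3)

lemma Qplus_scaleR: "x \<in> Qplus \<Longrightarrow> 0 \<le> c \<Longrightarrow> c *\<^sub>R x \<in> Qplus"
  by (simp add: Qplus_def)

lemma axis_Qplus: "axis l 1 \<in> Qplus"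
  by (simp add: Qplus_def axis_def)

lemma closed_Qplus: "closed Qplus"
proof -
  have "closed {x::real^3. \<forall>i. x$i \<in> {0..}}" by (intro closed_vector_box) auto
  then show ?thesis by (simp add: Qplus_def)
qed

lemma Qplus_nth_le_coord_sum: "x \<in> Qplus \<Longrightarrow> 0 \<le> x$t \<and> x$t \<le> coord_sum x"
  using exhaust_3[of t] by (auto simp: Qplus_iff coord_sum_3)

lemma coord_sum_Qplus_nonneg: "x \<in> Qplus \<Longrightarrow> 0 \<le> coord_sum x"
  by (simp add: Qplus_iff coord_sum_3)

lemma coord_sum_Qplus_pos: "x \<in> Qplus \<Longrightarrow> x \<noteq> 0 \<Longrightarrow> 0 < coord_sum x"
  by (auto simp: Qplus_iff coord_sum_3 vec_eq_iff forall_3)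

lemma norm1_Qplus: "x \<in> Qplus \<Longrightarrow> norm1 x = coord_sum x"
  by (simp add: norm1_def coord_sum_def Qplus_def)

lemma normalize_sum_Qplus: "x \<in> Qplus \<Longrightarrow> (1 / norm1 x) *\<^sub>R x = normalize_sum x"
  by (simp add: normalize_sum_def norm1_Qplus)

(* For nonzero u, v in Q+: the l1-normalisations of u and v differ by at most D in every
   coordinate. The denominators are cleared so that zero vectors need no special case. *)
definition dir_close :: "real \<Rightarrow> real^'n \<Rightarrow> real^'n \<Rightarrow> bool" where
  "dir_close D u v \<longleftrightarrow>
     (\<forall>t. \<bar>u$t * coord_sum v - v$t * coord_sum u\<bar> \<le> D * coord_sum u * coord_sum v)"

lemma dir_close_mono:
  assumes "dir_close D u v" "D \<le> D'" "0 \<le> coord_sum u * coord_sum v"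
  shows "dir_close D' u v"
  unfolding dir_close_def
proof
  fix t
  have "\<bar>u$t * coord_sum v - v$t * coord_sum u\<bar> \<le> D * coord_sum u * coord_sum v"
    using assms(1) by (simp add: dir_close_def)
  also have "\<dots> \<le> D' * coord_sum u * coord_sum v"
    using mult_right_mono[OF assms(2,3)] by (simp add: mult.assoc)
  finally show "\<bar>u$t * coord_sum v - v$t * coord_sum u\<bar> \<le> D' * coord_sum u * coord_sum v" .
qed

lemma dir_close_Qplus: "u \<in> Qplus \<Longrightarrow> v \<in> Qplus \<Longrightarrow> dir_close 1 u v"
  unfolding dir_close_def
proof (intro allI)
  fix t assume u: "u \<in> Qplus" and v: "v \<in> Qplus"
  have "u$t * coord_sum v \<le> coord_sum u * coord_sum v" "v$t * coord_sum u \<le> coord_sum v * coord_sum u"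
    using u v by (simp_all add: Qplus_nth_le_coord_sum coord_sum_Qplus_nonneg mult_right_mono)
  moreover have "0 \<le> u$t * coord_sum v" "0 \<le> v$t * coord_sum u"
    using u v by (simp_all add: Qplus_nth_le_coord_sum coord_sum_Qplus_nonneg)
  ultimately show "\<bar>u$t * coord_sum v - v$t * coord_sum u\<bar> \<le> 1 * coord_sum u * coord_sum v"
    by (simp add: abs_le_iff mult.commute)
qed

lemma dist_normalize_sum_le:
  fixes u v :: "real^'n"
  assumes "dir_close D u v" "0 < coord_sum u" "0 < coord_sum v"
  shows "dist (normalize_sum u) (normalize_sum v) \<le> real CARD('n) * D"
proof -
  have "\<bar>normalize_sum u $ t - normalize_sum v $ t\<bar> \<le> D" for t
  proof -
    have pos: "0 < coord_sum u * coord_sum v" using assms(2,3) by simp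
    have "normalize_sum u $ t - normalize_sum v $ t
        = (u$t * coord_sum v - v$t * coord_sum u) / (coord_sum u * coord_sum v)"
      using assms(2,3) by (simp add: normalize_sum_def field_simps)
    moreover have "\<bar>u$t * coord_sum v - v$t * coord_sum u\<bar> \<le> D * (coord_sum u * coord_sum v)"
      using assms(1) by (simp add: dir_close_def mult.assoc)
    ultimately show ?thesis using pos by (simp add: abs_divide pos_divide_le_eq)
  qed
  then have "(\<Sum>t\<in>UNIV. \<bar>(normalize_sum u - normalize_sum v) $ t\<bar>) \<le> real CARD('n) * D"
    using sum_bounded_above[of UNIV "\<lambda>t. \<bar>(normalize_sum u - normalize_sum v) $ t\<bar>" D]
    by simp
  then show ?thesis
    using norm_le_l1_cart[of "normalize_sum u - normalize_sum v"] unfolding dist_norm by linarith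
qed

lemma dir_close_combination:
  fixes G :: "real^'n^'m" and z z' :: "real^'m"
  assumes z: "\<forall>l. 0 \<le> z$l" and z': "\<forall>l. 0 \<le> z'$l"
    and rows: "\<forall>l l'. dir_close D (G$l) (G$l')"
  shows "\<bar>(z v* G)$t * coord_sum (z' v* G) - (z' v* G)$t * coord_sum (z v* G)\<bar>
     \<le> D * (coord_sum (z v* G) * coord_sum (z' v* G) - (\<Sum>l\<in>UNIV. z$l * z'$l * coord_sum (G$l)^2))"
proof -
  define S where "S l = coord_sum (G$l)" for l
  define X where "X l l' = G$l$t * S l' - G$l'$t * S l" for l l'
  have "(z v* G)$t * coord_sum (z' v* G) - (z' v* G)$t * coord_sum (z v* G)
      = (\<Sum>l\<in>UNIV. \<Sum>l'\<in>UNIV. z$l * G$l$t * (z'$l' * S l'))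
        - (\<Sum>l\<in>UNIV. \<Sum>l'\<in>UNIV. z$l * S l * (z'$l' * G$l'$t))"
    unfolding coord_sum_vector_matrix S_def unfolding vector_matrix_mult_def
    by (simp add: sum_product, subst sum.swap, simp add: mult_ac)
  also have "\<dots> = (\<Sum>l\<in>UNIV. \<Sum>l'\<in>UNIV. z$l * z'$l' * X l l')"
    unfolding sum_subtractf[symmetric] by (intro sum.cong refl) (simp add: X_def algebra_simps)
  finally have expand: "(z v* G)$t * coord_sum (z' v* G) - (z' v* G)$t * coord_sum (z v* G)
      = (\<Sum>l\<in>UNIV. \<Sum>l'\<in>UNIV. z$l * z'$l' * X l l')" .
  have term_bound: "\<bar>z$l * z'$l' * X l l'\<bar>
      \<le> D * (z$l * S l * (z'$l' * S l')) - (if l = l' then D * (z$l * z'$l * S l ^ 2) else 0)" for l l'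
  proof (cases "l = l'")
    case True
    then show ?thesis by (simp add: X_def power2_eq_square algebra_simps)
  next
    case False
    have "\<bar>X l l'\<bar> \<le> D * S l * S l'" using rows by (simp add: dir_close_def X_def S_def)
    then have "z$l * z'$l' * \<bar>X l l'\<bar> \<le> z$l * z'$l' * (D * S l * S l')"
      using z z' by (simp add: mult_left_mono)
    with False show ?thesis using z z' by (simp add: abs_mult algebra_simps)
  qed
  have "\<bar>\<Sum>l\<in>UNIV. \<Sum>l'\<in>UNIV. z$l * z'$l' * X l l'\<bar>
      \<le> (\<Sum>l\<in>UNIV. \<Sum>l'\<in>UNIV. \<bar>z$l * z'$l' * X l l'\<bar>)"
    by (rule order_trans[OF sum_abs sum_mono]) (rule sum_abs)
  also have "\<dots> \<le> (\<Sum>l\<in>UNIV. \<Sum>l'\<in>UNIV.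
      D * (z$l * S l * (z'$l' * S l')) - (if l = l' then D * (z$l * z'$l * S l ^ 2) else 0))"
    by (intro sum_mono term_bound)
  also have "\<dots> = D * (coord_sum (z v* G) * coord_sum (z' v* G) - (\<Sum>l\<in>UNIV. z$l * z'$l * S l ^ 2))"
    unfolding coord_sum_vector_matrix S_def[symmetric] right_diff_distrib
    by (subst sum_product) (simp add: sum_subtractf sum_distrib_left)
  finally show ?thesis unfolding expand S_def .
qed

lemma coord_sum_vector_matrix_le_last:
  fixes G :: "real^3^3"
  assumes sums: "coord_sum (G$1) \<le> coord_sum (G$3)" "coord_sum (G$2) \<le> coord_sum (G$3)"
    and "0 \<le> coord_sum (G$3)" and z: "z \<in> Qplus" "z$1 + z$2 \<le> 2 * z$3"
  shows "coord_sum (z v* G) \<le> 3 * z$3 * coord_sum (G$3)"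
proof -
  have "z$1 * coord_sum (G$1) \<le> z$1 * coord_sum (G$3)" "z$2 * coord_sum (G$2) \<le> z$2 * coord_sum (G$3)"
    using sums z(1) by (simp_all add: Qplus_iff mult_left_mono)
  moreover have "(z$1 + z$2) * coord_sum (G$3) \<le> (2 * z$3) * coord_sum (G$3)"
    using z(2) assms(3) by (rule mult_right_mono)
  ultimately show ?thesis by (simp add: coord_sum_vector_matrix sum_3 algebra_simps)
qed

(* The gain over D comes from the diagonal terms of dir_close_combination alone: when
   z1 + z2 <= 2 z3, the term l = 3 already carries 1/9 of the product of the coordinate sums. *)
lemma dir_close_contraction:
  fixes G :: "real^3^3"
  assumes rows: "\<forall>l l'. dir_close D (G$l) (G$l')" and "0 \<le> D"
    and sums_nonneg: "\<forall>l. 0 \<le> coord_sum (G$l)"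
    and sums: "coord_sum (G$1) \<le> coord_sum (G$3)" "coord_sum (G$2) \<le> coord_sum (G$3)"
    and z: "z \<in> Qplus" "z$1 + z$2 \<le> 2 * z$3" and z': "z' \<in> Qplus" "z'$1 + z'$2 \<le> 2 * z'$3"
  shows "dir_close (8/9 * D) (z v* G) (z' v* G)"
  unfolding dir_close_def
proof
  fix t
  let ?S = "\<lambda>x. coord_sum (x v* G)" and ?A = "coord_sum (G$3)"
  have nonneg: "\<forall>l. 0 \<le> z$l" "\<forall>l. 0 \<le> z'$l" using z(1) z'(1) by (simp_all add: Qplus_def)
  have "?S z * ?S z' \<le> (3 * z$3 * ?A) * (3 * z'$3 * ?A)"
  proof (rule mult_mono)
    show "?S z \<le> 3 * z$3 * ?A" "?S z' \<le> 3 * z'$3 * ?A"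
      using coord_sum_vector_matrix_le_last sums sums_nonneg z z' by blast+
    show "0 \<le> 3 * z$3 * ?A" "0 \<le> ?S z'"
      using nonneg sums_nonneg by (simp_all add: coord_sum_vector_matrix sum_nonneg)
  qed
  also have "\<dots> \<le> 9 * (\<Sum>l\<in>UNIV. z$l * z'$l * coord_sum (G$l)^2)"
    using nonneg by (simp add: sum_3 power2_eq_square algebra_simps)
  finally have "?S z * ?S z' - (\<Sum>l\<in>UNIV. z$l * z'$l * coord_sum (G$l)^2) \<le> 8/9 * (?S z * ?S z')"
    by simp
  then have "D * (?S z * ?S z' - (\<Sum>l\<in>UNIV. z$l * z'$l * coord_sum (G$l)^2)) \<le> D * (8/9 * (?S z * ?S z'))"
    using \<open>0 \<le> D\<close> by (rule mult_left_mono)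
  with dir_close_combination[OF nonneg rows, of t]
  show "\<bar>(z v* G)$t * ?S z' - (z' v* G)$t * ?S z\<bar> \<le> 8/9 * D * ?S z * ?S z'"
    by (simp add: algebra_simps)
qed

lemma vector_matrix_Bmat:
  "(x v* Bmat m)$1 = x$2" "(x v* Bmat m)$2 = x$1 + x$3"
  "(x v* Bmat m)$3 = (real m - 1) * x$1 + real m * x$3"
  by (simp_all add: Bmat_def vector_matrix_mult_def sum_3)

lemma det_Bmat: "det (Bmat m) = -1"
  by (simp add: det_3 Bmat_def)

lemma Bmat_Qplus: "x \<in> Qplus \<Longrightarrow> 0 < m \<Longrightarrow> x v* Bmat m \<in> Qplus"
  by (simp add: Qplus_iff vector_matrix_Bmat)

lemma coord_sum_Bmat_ge:
  assumes "x \<in> Qplus" "0 < m"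
  shows "coord_sum x \<le> coord_sum (x v* Bmat m)"
proof -
  have "1 * x$3 \<le> real m * x$3" using assms by (intro mult_right_mono) (simp_all add: Qplus_iff)
  then show ?thesis using assms by (simp add: coord_sum_3 vector_matrix_Bmat Qplus_iff)
qed

lemma vector_matrix_prodB_Suc: "x v* prodB k (Suc n) = (x v* Bmat (k (Suc n))) v* prodB k n"
  by (simp add: vector_matrix_mul_assoc)

lemma invertible_prodB: "invertible (prodB k n)"
  by (induction n) (simp_all add: invertible_det_nz det_mul det_Bmat)

definition wedge :: "(real^3) set" where
  "wedge = {w \<in> Qplus. w$2 \<le> w$1 + w$3}"

lemma Bmat_into_wedge:
  assumes "x \<in> Qplus" "2 \<le> m"
  shows "x v* Bmat m \<in> wedge"
proof -
  have "1 * x$1 \<le> (real m - 1) * x$1" "1 * x$3 \<le> real m * x$3"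
    using assms by (intro mult_right_mono; simp add: Qplus_iff)+
  then show ?thesis using assms by (simp add: wedge_def Qplus_iff vector_matrix_Bmat algebra_simps)
qed

lemma Bmat_one_twice_wedge: "w \<in> wedge \<Longrightarrow> (w v* Bmat 1) v* Bmat 1 \<in> wedge"
  by (simp add: wedge_def Qplus_iff vector_matrix_Bmat)

lemma Bmat_from_wedge:
  assumes "w \<in> wedge" "2 \<le> m" and z: "z = w v* Bmat m"
  shows "z \<in> Qplus" "z$1 + z$2 \<le> 2 * z$3"
proof -
  have "w \<in> Qplus" "w$2 \<le> w$1 + w$3" using assms(1) by (simp_all add: wedge_def)
  moreover have "1 * w$1 \<le> (real m - 1) * w$1" "2 * w$3 \<le> real m * w$3"
    using assms(2) calculation(1) by (intro mult_right_mono; simp add: Qplus_iff)+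
  ultimately show "z \<in> Qplus" "z$1 + z$2 \<le> 2 * z$3"
    by (simp_all add: z Qplus_iff vector_matrix_Bmat)
qed

lemma odd_gap_between:
  fixes P :: "nat \<Rightarrow> bool"
  assumes "e < e'" "odd (e' - e)" "P e" "P e'"
  shows "\<exists>a b. e \<le> a \<and> a < b \<and> odd (b - a) \<and> P a \<and> P b \<and>
           (\<forall>i. a < i \<and> i < b \<longrightarrow> \<not> P i)"
  using assms
proof (induction "e' - e" arbitrary: e rule: less_induct)
  case less
  obtain i where i: "e < i" "P i" "\<forall>l. e < l \<and> l < i \<longrightarrow> \<not> P l"
    using exists_least_iff[of "\<lambda>i. e < i \<and> P i"] less.prems(1,4) by blast
  have "i \<le> e'" using i(3) less.prems(1,4) by (meson not_le)
  show ?case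
  proof (cases "odd (i - e)")
    case True
    then show ?thesis using i less.prems(3) by blast
  next
    case False
    have "e' - e = (e' - i) + (i - e)" using i(1) \<open>i \<le> e'\<close> by simp
    then have "odd (e' - i)" using False less.prems(2) by simp
    then have "i < e'" using \<open>i \<le> e'\<close> by (auto simp: le_less)
    moreover have "e' - i < e' - e" using i(1) \<open>i < e'\<close> by simp
    ultimately obtain a b where "i \<le> a" "a < b" "odd (b - a)" "P a" "P b"
        "\<forall>l. a < l \<and> l < b \<longrightarrow> \<not> P l"
      using less.hyps[of i] \<open>odd (e' - i)\<close> i(2) less.prems(4) by blast
    then show ?thesis using i(1) by (meson less_imp_le order_trans)
  qed
qed

definition digit_cone :: "(nat \<Rightarrow> nat) \<Rightarrow> nat \<Rightarrow> (real^3) set" where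
  "digit_cone k n = (\<lambda>x. x v* prodB k n) ` Qplus"

definition cone_dir_close :: "(nat \<Rightarrow> nat) \<Rightarrow> nat \<Rightarrow> real \<Rightarrow> bool" where
  "cone_dir_close k n D \<longleftrightarrow> (\<forall>u\<in>digit_cone k n. \<forall>v\<in>digit_cone k n. dir_close D u v)"

lemma prodB_row_in_digit_cone: "prodB k n $ l \<in> digit_cone k n"
  unfolding digit_cone_def using axis_Qplus axis_vector_matrix by (metis image_eqI)

lemma digit_cone_scaleR: "x \<in> digit_cone k n \<Longrightarrow> 0 \<le> c \<Longrightarrow> c *\<^sub>R x \<in> digit_cone k n"
  unfolding digit_cone_def by (auto simp: scaleR_vector_matrix_assoc[symmetric] Qplus_scaleR)

lemma closed_digit_cone: "closed (digit_cone k n)"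
proof -
  have "linear (\<lambda>x. x v* prodB k n)"
    using matrix_vector_mul_linear[of "transpose (prodB k n)"] by simp
  moreover have "inj (\<lambda>x. x v* prodB k n)"
    using inj_matrix_vector_mult[OF transpose_invertible[OF invertible_prodB]] unfolding inj_def by simp
  ultimately show ?thesis
    unfolding digit_cone_def by (rule closed_injective_linear_image[OF closed_Qplus])
qed

lemma prodB_ones_wedge:
  assumes "w \<in> wedge" and ones: "\<forall>i. 1 \<le> i \<and> i \<le> 2*j \<longrightarrow> k (s+1+i) = 1"
  shows "\<exists>w'\<in>wedge. w v* prodB k (s+1+2*j) = w' v* prodB k (s+1)"
  using assms
proof (induction j arbitrary: w)
  case 0
  then show ?case by auto
next
  case (Suc j)
  have "k (Suc (Suc (s+1+2*j))) = 1" "k (Suc (s+1+2*j)) = 1"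
    using Suc.prems(2)[rule_format, of "2*j+2"] Suc.prems(2)[rule_format, of "2*j+1"]
    by (simp_all add: algebra_simps)
  moreover have "s+1+2*Suc j = Suc (Suc (s+1+2*j))" by simp
  ultimately have "w v* prodB k (s+1+2*Suc j) = ((w v* Bmat 1) v* Bmat 1) v* prodB k (s+1+2*j)"
    by (simp only: vector_matrix_prodB_Suc)
  then show ?case using Suc Bmat_one_twice_wedge by simp
qed

lemma prodB_window:
  assumes "2 \<le> k (Suc s)" "2 \<le> k (s+2*j+2)"
    and ones: "\<forall>i. 1 \<le> i \<and> i \<le> 2*j \<longrightarrow> k (s+1+i) = 1" and "y \<in> Qplus"
  shows "\<exists>z\<in>Qplus. y v* prodB k (s+2*j+2) = z v* prodB k s \<and> z$1 + z$2 \<le> 2 * z$3"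
proof -
  have "y v* prodB k (s+2*j+2) = (y v* Bmat (k (s+2*j+2))) v* prodB k (s+1+2*j)"
    using vector_matrix_prodB_Suc[of y k "s+1+2*j"] by (simp add: add.commute add.left_commute)
  moreover have "y v* Bmat (k (s+2*j+2)) \<in> wedge" using assms(4,2) by (rule Bmat_into_wedge)
  ultimately obtain w where w: "w \<in> wedge" "y v* prodB k (s+2*j+2) = w v* prodB k (s+1)"
    using prodB_ones_wedge[OF _ ones] by auto
  define z where "z = w v* Bmat (k (Suc s))"
  have "y v* prodB k (s+2*j+2) = z v* prodB k s"
    using w(2) by (simp add: z_def vector_matrix_mul_assoc)
  then show ?thesis using Bmat_from_wedge[OF w(1) assms(1) z_def] by blast
qed

locale positive_digits =
  fixes k :: "nat \<Rightarrow> nat"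
  assumes digits_pos: "\<forall>i\<ge>1. 1 \<le> k i"
begin

lemma digit_Suc_pos [simp]: "0 < k (Suc n)"
  using digits_pos[rule_format, of "Suc n"] by simp

lemma prodB_Qplus: "x \<in> Qplus \<Longrightarrow> x v* prodB k n \<in> Qplus"
proof (induction n arbitrary: x)
  case (Suc n)
  then show ?case using Suc.IH[OF Bmat_Qplus] by (simp add: vector_matrix_mul_assoc[symmetric])
qed simp

lemma coord_sum_prodB_ge: "x \<in> Qplus \<Longrightarrow> coord_sum x \<le> coord_sum (x v* prodB k n)"
proof (induction n arbitrary: x)
  case (Suc n)
  have "coord_sum x \<le> coord_sum (x v* Bmat (k (Suc n)))" using Suc.prems by (simp add: coord_sum_Bmat_ge)
  also have "\<dots> \<le> coord_sum (x v* prodB k (Suc n))"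
    using Suc.IH[OF Bmat_Qplus] Suc.prems by (simp add: vector_matrix_mul_assoc[symmetric])
  finally show ?case .
qed simp

lemma coord_sum_prodB_pos: "x \<in> Qplus \<Longrightarrow> x \<noteq> 0 \<Longrightarrow> 0 < coord_sum (x v* prodB k n)"
  using coord_sum_Qplus_pos coord_sum_prodB_ge by (meson less_le_trans)

lemma digit_cone_subset_Qplus: "digit_cone k n \<subseteq> Qplus"
  using prodB_Qplus by (auto simp: digit_cone_def)

lemma digit_cone_Suc_subset: "digit_cone k (Suc n) \<subseteq> digit_cone k n"
  unfolding digit_cone_def
proof (rule image_subsetI)
  fix x assume "x \<in> Qplus"
  then show "x v* prodB k (Suc n) \<in> (\<lambda>x. x v* prodB k n) ` Qplus"
    unfolding vector_matrix_prodB_Suc by (intro imageI Bmat_Qplus) simp_all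
qed

lemma digit_cone_antimono: "n \<le> m \<Longrightarrow> digit_cone k m \<subseteq> digit_cone k n"
  by (induction m rule: dec_induct) (use digit_cone_Suc_subset in auto)

lemma prodB_orbit_in_digit_cone:
  assumes "a \<in> Qplus" "m \<le> n"
  shows "a v* prodB k n \<in> digit_cone k m"
proof -
  have "a v* prodB k n \<in> digit_cone k n" using assms(1) by (simp add: digit_cone_def)
  then show ?thesis using digit_cone_antimono[OF assms(2)] by blast
qed

lemma coord_sum_prodB_row_nonneg: "0 \<le> coord_sum (prodB k n $ l)"
  using prodB_row_in_digit_cone digit_cone_subset_Qplus coord_sum_Qplus_nonneg by blast

lemma coord_sum_prodB_rows:
  "coord_sum (prodB k n $ 1) \<le> coord_sum (prodB k n $ 3) \<and>
   coord_sum (prodB k n $ 2) \<le> coord_sum (prodB k n $ 3)"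
proof (induction n)
  case 0
  then show ?case by (simp add: coord_sum_3 mat_def)
next
  case (Suc n)
  define S where "S l = coord_sum (prodB k n $ l)" for l
  define m where "m = real (k (Suc n))"
  have rows: "coord_sum (prodB k (Suc n) $ l) = (\<Sum>l'\<in>UNIV. Bmat (k (Suc n)) $ l $ l' * S l')" for l
    by (simp add: row_matrix_mult coord_sum_vector_matrix S_def)
  have "0 \<le> S 2" "0 \<le> S 3" by (simp_all add: S_def coord_sum_prodB_row_nonneg)
  moreover have "1 * S 3 \<le> m * S 3" using calculation by (intro mult_right_mono) (simp_all add: m_def Suc_le_eq)
  ultimately show ?case using Suc.IH unfolding rows by (simp add: sum_3 Bmat_def S_def m_def algebra_simps)
qed

lemma cone_dir_close_initial: "cone_dir_close k n 1"
  by (simp add: cone_dir_close_def dir_close_Qplus subsetD[OF digit_cone_subset_Qplus])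

lemma cone_dir_close_mono:
  assumes "cone_dir_close k n D" "n \<le> m" "D \<le> D'"
  shows "cone_dir_close k m D'"
  unfolding cone_dir_close_def
proof (intro ballI)
  fix u v assume "u \<in> digit_cone k m" "v \<in> digit_cone k m"
  then have "u \<in> digit_cone k n" "v \<in> digit_cone k n" "u \<in> Qplus" "v \<in> Qplus"
    using subsetD[OF digit_cone_antimono[OF assms(2)]] subsetD[OF digit_cone_subset_Qplus] by blast+
  then have "dir_close D u v" using assms(1) by (simp add: cone_dir_close_def)
  moreover have "0 \<le> coord_sum u * coord_sum v"
    using \<open>u \<in> Qplus\<close> \<open>v \<in> Qplus\<close> by (simp add: coord_sum_Qplus_nonneg)
  ultimately show "dir_close D' u v" using assms(3) dir_close_mono by blast
qed

lemma cone_dir_close_window: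
  assumes "2 \<le> k (Suc s)" "2 \<le> k (s+2*j+2)"
    and ones: "\<forall>i. 1 \<le> i \<and> i \<le> 2*j \<longrightarrow> k (s+1+i) = 1"
    and close: "cone_dir_close k s D" and "0 \<le> D"
  shows "cone_dir_close k (s+2*j+2) (8/9 * D)"
  unfolding cone_dir_close_def
proof (intro ballI)
  have window: "\<exists>z\<in>Qplus. x = z v* prodB k s \<and> z$1 + z$2 \<le> 2 * z$3"
    if "x \<in> digit_cone k (s+2*j+2)" for x
    using that prodB_window[OF assms(1-3)] unfolding digit_cone_def by blast
  have rows: "\<forall>l l'. dir_close D (prodB k s $ l) (prodB k s $ l')"
    using close prodB_row_in_digit_cone by (simp add: cone_dir_close_def)
  fix u v assume "u \<in> digit_cone k (s+2*j+2)" "v \<in> digit_cone k (s+2*j+2)"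
  then obtain z z' where z: "z \<in> Qplus" "u = z v* prodB k s" "z$1 + z$2 \<le> 2 * z$3"
      and z': "z' \<in> Qplus" "v = z' v* prodB k s" "z'$1 + z'$2 \<le> 2 * z'$3"
    using window by meson
  have "\<forall>l. 0 \<le> coord_sum (prodB k s $ l)" using coord_sum_prodB_row_nonneg by blast
  then show "dir_close (8/9 * D) u v"
    unfolding z(2) z'(2) using coord_sum_prodB_rows[of s]
    by (intro dir_close_contraction[OF rows \<open>0 \<le> D\<close> _ _ _ z(1,3) z'(1,3)]) simp_all
qed

end

locale recurrent_digits = positive_digits +
  assumes even_inf: "infinite {i. i \<ge> 1 \<and> k (2 * i) > 1}"
    and odd_inf: "infinite {i. i \<ge> 1 \<and> k (2 * i - 1) > 1}"
begin

(* The parity hypotheses give digits > 1 at an even and at a later odd position; between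
   them lie two consecutive digits > 1 separated by an even run of ones. *)
lemma window_exists:
  "\<exists>s j. n0 \<le> s \<and> 2 \<le> k (Suc s) \<and> 2 \<le> k (s+2*j+2) \<and>
     (\<forall>i. 1 \<le> i \<and> i \<le> 2*j \<longrightarrow> k (s+1+i) = 1)"
proof -
  obtain i where i: "n0 < i" "1 < k (2*i)"
    using even_inf unfolding infinite_nat_iff_unbounded by blast
  obtain i' where i': "i < i'" "1 < k (2*i' - 1)"
    using odd_inf unfolding infinite_nat_iff_unbounded by blast
  have "2*i < 2*i' - 1" "odd ((2*i' - 1) - 2*i)" using i'(1) by presburger+
  then obtain a b where ab: "2*i \<le> a" "a < b" "odd (b - a)" "1 < k a" "1 < k b"
      "\<forall>l. a < l \<and> l < b \<longrightarrow> \<not> 1 < k l"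
    using odd_gap_between[of "2*i" "2*i' - 1" "\<lambda>l. 1 < k l"] i(2) i'(2) by blast
  obtain j where j: "b - a = 2*j + 1" using ab(3) oddE by blast
  define s where "s = a - 1"
  have a: "Suc s = a" and b: "s + 2*j + 2 = b" using i(1) ab(1,2) j by (simp_all add: s_def)
  have "k (s+1+l) = 1" if "1 \<le> l" "l \<le> 2*j" for l
  proof -
    have "a < s+1+l" "s+1+l < b" using that a b by simp_all
    then have "\<not> 1 < k (s+1+l)" using ab(6) by blast
    moreover have "1 \<le> k (s+1+l)" using digits_pos by simp
    ultimately show ?thesis by linarith
  qed
  moreover have "n0 \<le> s" using i(1) ab(1) by (simp add: s_def)
  ultimately show ?thesis using a b ab(4,5) by (intro exI[of _ s] exI[of _ j]) auto
qed

lemma cone_dir_close_power: "\<exists>n. cone_dir_close k n ((8/9)^m)"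
proof (induction m)
  case 0
  show ?case using cone_dir_close_initial by auto
next
  case (Suc m)
  then obtain n where n: "cone_dir_close k n ((8/9)^m)" by blast
  obtain s j where window: "n \<le> s" "2 \<le> k (Suc s)" "2 \<le> k (s+2*j+2)"
      "\<forall>i. 1 \<le> i \<and> i \<le> 2*j \<longrightarrow> k (s+1+i) = 1"
    using window_exists by blast
  have "cone_dir_close k s ((8/9)^m)" using cone_dir_close_mono[OF n window(1)] by simp
  then have "cone_dir_close k (s+2*j+2) ((8/9)^Suc m)"
    using cone_dir_close_window[OF window(2-4)] by simp
  then show ?case by blast
qed

lemma cone_dir_close_eventually:
  assumes "0 < e"
  shows "\<exists>n0. \<forall>n\<ge>n0. cone_dir_close k n e"
proof -
  obtain m where "(8/9::real)^m < e" using real_arch_pow_inv[OF assms, of "8/9"] by auto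
  moreover obtain n0 where "cone_dir_close k n0 ((8/9)^m)" using cone_dir_close_power by blast
  ultimately show ?thesis using cone_dir_close_mono by (meson less_imp_le)
qed

lemma normalized_cones_shrink:
  assumes "0 < e"
  shows "\<exists>n0. \<forall>n\<ge>n0. \<forall>u\<in>digit_cone k n. \<forall>v\<in>digit_cone k n.
           u \<noteq> 0 \<longrightarrow> v \<noteq> 0 \<longrightarrow> dist (normalize_sum u) (normalize_sum v) \<le> e"
proof -
  obtain n0 where n0: "\<forall>n\<ge>n0. cone_dir_close k n (e/3)"
    using cone_dir_close_eventually[of "e/3"] assms by auto
  have "dist (normalize_sum u) (normalize_sum v) \<le> e"
    if "n0 \<le> n" "u \<in> digit_cone k n" "v \<in> digit_cone k n" "u \<noteq> 0" "v \<noteq> 0" for n u v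
  proof -
    have "dir_close (e/3) u v" using n0 that(1-3) by (simp add: cone_dir_close_def)
    moreover have "0 < coord_sum u" "0 < coord_sum v"
      using that(2-5) digit_cone_subset_Qplus coord_sum_Qplus_pos by blast+
    ultimately show ?thesis using dist_normalize_sum_le[of "e/3" u v] by simp
  qed
  then show ?thesis by blast
qed

lemma Cauchy_normalize_sum_orbit:
  assumes a: "a \<in> Qplus" "a \<noteq> 0"
  shows "Cauchy (\<lambda>n. normalize_sum (a v* prodB k n))"
proof (rule metric_CauchyI)
  fix e :: real assume "0 < e"
  then obtain n0 where n0: "\<forall>n\<ge>n0. \<forall>u\<in>digit_cone k n. \<forall>v\<in>digit_cone k n.
      u \<noteq> 0 \<longrightarrow> v \<noteq> 0 \<longrightarrow> dist (normalize_sum u) (normalize_sum v) \<le> e/2"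
    using normalized_cones_shrink[of "e/2"] by auto
  have orbit: "a v* prodB k n \<in> digit_cone k n0" "a v* prodB k n \<noteq> 0" if "n0 \<le> n" for n
    using prodB_orbit_in_digit_cone[OF a(1) that] coord_sum_prodB_pos[OF a, of n] by auto
  have "dist (normalize_sum (a v* prodB k m)) (normalize_sum (a v* prodB k n)) < e"
    if "n0 \<le> m" "n0 \<le> n" for m n
  proof -
    have "dist (normalize_sum (a v* prodB k m)) (normalize_sum (a v* prodB k n)) \<le> e/2"
      using n0 orbit[OF that(1)] orbit[OF that(2)] by blast
    then show ?thesis using \<open>0 < e\<close> by simp
  qed
  then show "\<exists>M. \<forall>m\<ge>M. \<forall>n\<ge>M.
      dist (normalize_sum (a v* prodB k m)) (normalize_sum (a v* prodB k n)) < e" by blast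
qed

lemma direction_in_all_cones: "\<exists>d. coord_sum d = 1 \<and> (\<forall>n. d \<in> digit_cone k n)"
proof -
  define a :: "real^3" where "a = axis 1 1"
  have a: "a \<in> Qplus" "a \<noteq> 0" by (simp_all add: a_def axis_Qplus axis_eq_0_iff)
  define f where "f n = normalize_sum (a v* prodB k n)" for n
  obtain d where d: "f \<longlonglongrightarrow> d"
    using Cauchy_normalize_sum_orbit[OF a] Cauchy_convergent_iff convergent_def unfolding f_def by blast
  have "d \<in> digit_cone k m" for m
  proof -
    have "f n \<in> digit_cone k m" if "m \<le> n" for n
      using prodB_orbit_in_digit_cone[OF a(1) that] coord_sum_prodB_pos[OF a, of n]
      unfolding f_def normalize_sum_def by (intro digit_cone_scaleR) (auto intro: less_imp_le)
    then have "eventually (\<lambda>n. f n \<in> digit_cone k m) sequentially"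
      by (auto simp: eventually_at_top_linorder)
    then show ?thesis by (rule Lim_in_closed_set[OF closed_digit_cone _ trivial_limit_sequentially d])
  qed
  moreover have "coord_sum d = 1"
  proof -
    have "(\<lambda>n. coord_sum (f n)) \<longlonglongrightarrow> coord_sum d"
      unfolding coord_sum_def by (intro tendsto_intros d)
    moreover have "coord_sum (f n) = 1" for n
      using coord_sum_prodB_pos[OF a, of n] by (simp add: f_def coord_sum_normalize_sum)
    ultimately show ?thesis by (simp add: LIMSEQ_const_iff)
  qed
  ultimately show ?thesis by blast
qed

lemma normalize_sum_eq_in_all_cones:
  assumes "\<forall>n. x \<in> digit_cone k n" "\<forall>n. y \<in> digit_cone k n" "x \<noteq> 0" "y \<noteq> 0"
  shows "normalize_sum x = normalize_sum y"
proof -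
  have "dist (normalize_sum x) (normalize_sum y) \<le> 0 + e" if "0 < e" for e
    using normalized_cones_shrink[OF that] assms by auto
  then have "dist (normalize_sum x) (normalize_sum y) \<le> 0" by (rule field_le_epsilon)
  then show ?thesis by simp
qed

lemma Inter_digit_cones:
  assumes d: "coord_sum d = 1" "\<forall>n. d \<in> digit_cone k n"
  shows "(\<Inter>n\<in>{1..}. digit_cone k n) = {t *\<^sub>R d | t. t \<ge> 0}"
proof (intro equalityI subsetI)
  fix x assume "x \<in> (\<Inter>n\<in>{1..}. digit_cone k n)"
  then have x: "\<forall>n. x \<in> digit_cone k n" using digit_cone_Suc_subset by fastforce
  show "x \<in> {t *\<^sub>R d | t. t \<ge> 0}"
  proof (cases "x = 0")
    case True
    then show ?thesis by force
  next
    case False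
    have "d \<noteq> 0" using d(1) by auto
    have "0 < coord_sum x" using x False digit_cone_subset_Qplus coord_sum_Qplus_pos by blast
    moreover have "normalize_sum x = d"
      using \<open>d \<noteq> 0\<close> normalize_sum_eq_in_all_cones[OF x d(2) False] d(1)
      by (simp add: normalize_sum_idem)
    ultimately have "x = coord_sum x *\<^sub>R d" by (auto simp: normalize_sum_def)
    then show ?thesis using \<open>0 < coord_sum x\<close> by (metis (mono_tags) less_imp_le mem_Collect_eq)
  qed
next
  fix x assume "x \<in> {t *\<^sub>R d | t. t \<ge> 0}"
  then show "x \<in> (\<Inter>n\<in>{1..}. digit_cone k n)" using digit_cone_scaleR d(2) by auto
qed

lemma normalize_sum_prodB_tendsto:
  assumes d: "coord_sum d = 1" "\<forall>n. d \<in> digit_cone k n" and a: "a \<in> Qplus" "a \<noteq> 0"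
  shows "(\<lambda>n. normalize_sum (a v* prodB k n)) \<longlonglongrightarrow> d"
proof (rule metric_LIMSEQ_I)
  fix e :: real assume "0 < e"
  then obtain n0 where n0: "\<forall>n\<ge>n0. \<forall>u\<in>digit_cone k n. \<forall>v\<in>digit_cone k n.
      u \<noteq> 0 \<longrightarrow> v \<noteq> 0 \<longrightarrow> dist (normalize_sum u) (normalize_sum v) \<le> e/2"
    using normalized_cones_shrink[of "e/2"] by auto
  have "dist (normalize_sum (a v* prodB k n)) d < e" if "n0 \<le> n" for n
  proof -
    have "a v* prodB k n \<in> digit_cone k n" "a v* prodB k n \<noteq> 0" "d \<noteq> 0"
      using prodB_orbit_in_digit_cone[OF a(1)] coord_sum_prodB_pos[OF a, of n] d(1) by auto
    then have "dist (normalize_sum (a v* prodB k n)) (normalize_sum d) \<le> e/2"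
      using n0 that d(2) by blast
    then show ?thesis using d(1) \<open>0 < e\<close> by (simp add: normalize_sum_idem)
  qed
  then show "\<exists>no. \<forall>n\<ge>no. dist (normalize_sum (a v* prodB k n)) d < e" by blast
qed

end

theorem lemma3p3:
  fixes k :: "nat \<Rightarrow> nat"
  assumes pos: "\<forall>i\<ge>1. k i \<ge> 1"
    and even_inf: "infinite {i. i \<ge> 1 \<and> k (2 * i) > 1}"
    and odd_inf: "infinite {i. i \<ge> 1 \<and> k (2 * i - 1) > 1}"
  shows "\<exists>d :: real^3. d \<noteq> 0 \<and>
           (\<Inter>n\<in>{1..}. (\<lambda>x. x v* prodB k n) ` Qplus) = {t *\<^sub>R d | t. t \<ge> 0} \<and>
           (\<forall>a\<in>Qplus. a \<noteq> 0 \<longrightarrow>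
              (\<lambda>n. (1 / norm1 (a v* prodB k n)) *\<^sub>R (a v* prodB k n))
                \<longlonglongrightarrow> (1 / norm1 d) *\<^sub>R d)"
proof -
  interpret recurrent_digits k
    by unfold_locales (fact pos even_inf odd_inf)+
  obtain d where d: "coord_sum d = 1" "\<forall>n. d \<in> digit_cone k n"
    using direction_in_all_cones by blast
  have "d \<in> Qplus" using d(2) digit_cone_subset_Qplus by blast
  then have norm1_d: "(1 / norm1 d) *\<^sub>R d = d"
    by (simp add: normalize_sum_Qplus normalize_sum_idem d(1))
  show ?thesis
  proof (intro exI[of _ d] conjI ballI impI)
    show "d \<noteq> 0" using d(1) by auto
    show "(\<Inter>n\<in>{1..}. (\<lambda>x. x v* prodB k n) ` Qplus) = {t *\<^sub>R d | t. t \<ge> 0}"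
      using Inter_digit_cones[OF d] by (simp add: digit_cone_def)
    fix a assume a: "a \<in> Qplus" "a \<noteq> 0"
    show "(\<lambda>n. (1 / norm1 (a v* prodB k n)) *\<^sub>R (a v* prodB k n))
        \<longlonglongrightarrow> (1 / norm1 d) *\<^sub>R d"
      using normalize_sum_prodB_tendsto[OF d a] prodB_Qplus[OF a(1)]
      by (simp add: normalize_sum_Qplus norm1_d)
  qed
qed

end
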